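(* Let $R$ be a commutative ring with unit and $f\in R$ a non-nilpotent element. Then the map $\mathrm{res}\colon\mathrm{prim}(R[f^{-1}])\to\mathrm{prim}(R)$, $I\mapsto I\cap R$, induces a homeomorphism onto its image, which is compact in $\mathrm{prim}(R)$. Moreover, for any finite family of non-nilpotent elements $f_1,\dots,f_m\in R$ generating the unit ideal, the sets $\mathrm{res}(\mathrm{prim}(R[f_i^{-1}]))$, $i=1,\dots,m$, form a finite compact cover of $\mathrm{prim}(R)$.
   Context: $\mathrm{Id}(R)$ denotes the set of proper ideals of $R$, endowed with the constructible topology (induced by the product topology on $\{0,1\}^R$ via characteristic functions); it is compact. $\mathrm{prim}(R)$ is the closure in $\mathrm{Id}(R)$ of the set of primary ideals of $R$. $I\cap R$ means the preimage of $I$ under the canonical map $R\to R[f^{-1}]$. *)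

theory Defs
  imports "HOL-Analysis.Analysis" "HOL-Algebra.Algebra"
begin

definition proper_ideals :: "('a, 'b) ring_scheme \<Rightarrow> 'a set set" where
  "proper_ideals R = {I. ideal I R \<and> I \<noteq> carrier R}"

definition ideal_top :: "('a, 'b) ring_scheme \<Rightarrow> 'a set topology" where
  "ideal_top R = pullback_topology (proper_ideals R)
      (\<lambda>I. restrict (\<lambda>x. x \<in> I) (carrier R))
      (product_topology (\<lambda>_. discrete_topology (UNIV :: bool set)) (carrier R))"

definition primary_ideal :: "('a, 'b) ring_scheme \<Rightarrow> 'a set \<Rightarrow> bool" where
  "primary_ideal R I \<longleftrightarrow> ideal I R \<and> I \<noteq> carrier R \<and>
     (\<forall>a\<in>carrier R. \<forall>b\<in>carrier R. a \<otimes>\<^bsub>R\<^esub> b \<in> I \<longrightarrow> a \<notin> I \<longrightarrow>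
        (\<exists>n::nat. b [^]\<^bsub>R\<^esub> n \<in> I))"

definition prim :: "('a, 'b) ring_scheme \<Rightarrow> 'a set set" where
  "prim R = (ideal_top R) closure_of {I. primary_ideal R I}"

section \<open>Localization R[f^-1] as fractions a/f^n\<close>

definition loc_rel :: "('a, 'b) ring_scheme \<Rightarrow> 'a \<Rightarrow> (('a \<times> nat) \<times> ('a \<times> nat)) set" where
  "loc_rel R f = {((a, n), (b, m)). a \<in> carrier R \<and> b \<in> carrier R \<and>
     (\<exists>k::nat. f [^]\<^bsub>R\<^esub> k \<otimes>\<^bsub>R\<^esub>
        (a \<otimes>\<^bsub>R\<^esub> f [^]\<^bsub>R\<^esub> m \<ominus>\<^bsub>R\<^esub> b \<otimes>\<^bsub>R\<^esub> f [^]\<^bsub>R\<^esub> n) = \<zero>\<^bsub>R\<^esub>)}"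

definition loc_class :: "('a, 'b) ring_scheme \<Rightarrow> 'a \<Rightarrow> 'a \<times> nat \<Rightarrow> ('a \<times> nat) set" where
  "loc_class R f p = loc_rel R f `` {p}"

definition loc_rep :: "('a \<times> nat) set \<Rightarrow> 'a \<times> nat" where
  "loc_rep A = (SOME q. q \<in> A)"

definition loc_ring :: "('a, 'b) ring_scheme \<Rightarrow> 'a \<Rightarrow> ('a \<times> nat) set ring" where
  "loc_ring R f = \<lparr>
     carrier = (carrier R \<times> (UNIV :: nat set)) // loc_rel R f,
     monoid.mult = (\<lambda>U V. case loc_rep U of (a, n) \<Rightarrow> case loc_rep V of (b, m) \<Rightarrow>
                      loc_class R f (a \<otimes>\<^bsub>R\<^esub> b, n + m)),
     monoid.one = loc_class R f (\<one>\<^bsub>R\<^esub>, 0),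
     ring.zero = loc_class R f (\<zero>\<^bsub>R\<^esub>, 0),
     ring.add = (\<lambda>U V. case loc_rep U of (a, n) \<Rightarrow> case loc_rep V of (b, m) \<Rightarrow>
                      loc_class R f (a \<otimes>\<^bsub>R\<^esub> f [^]\<^bsub>R\<^esub> m \<oplus>\<^bsub>R\<^esub> b \<otimes>\<^bsub>R\<^esub> f [^]\<^bsub>R\<^esub> n, n + m))
   \<rparr>"

definition loc_map :: "('a, 'b) ring_scheme \<Rightarrow> 'a \<Rightarrow> 'a \<Rightarrow> ('a \<times> nat) set" where
  "loc_map R f a = loc_class R f (a, 0)"

text \<open>res(I) = I \<inter> R, the preimage of I under the canonical map.\<close>
definition res :: "('a, 'b) ring_scheme \<Rightarrow> 'a \<Rightarrow> ('a \<times> nat) set set \<Rightarrow> 'a set" where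
  "res R f I = {a \<in> carrier R. loc_map R f a \<in> I}"

end

theory Submission
  imports Defs
begin

(* Contracting ideals along a ring map h is continuous for the constructible topologies: whether a
   lies in the contraction of I is whether h a lies in I, a single coordinate of {0,1}^S. Contractions
   of primary ideals are primary, so by continuity res maps prim(R[f^-1]) into prim(R). The space of
   ideals of any ring is compact Hausdorff, being a closed subspace of {0,1}^R; hence prim(R[f^-1]) is
   compact, and res, which is injective because a/f^n and a/1 differ by a unit, is an
   embedding with compact image.
   For the cover, a primary ideal Q cannot contain a power of every f_i, for then its radical would
   contain the unit ideal generated by the f_i. If no power of f_i lies in Q, then Q is saturated
   with respect to f_i, so its extension to R[f_i^-1] is primary with contraction Q. Thus the finite
   union of the compact, hence closed, images contains all primary ideals, and so their closure. *)

section \<open>Ideals and radicals\<close>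

lemma (in ring) idealI_closed:
  assumes "I \<subseteq> carrier R" "\<zero> \<in> I" "\<And>a b. a \<in> I \<Longrightarrow> b \<in> I \<Longrightarrow> a \<oplus> b \<in> I"
    and "\<And>a r. a \<in> I \<Longrightarrow> r \<in> carrier R \<Longrightarrow> r \<otimes> a \<in> I \<and> a \<otimes> r \<in> I"
  shows "ideal I R"
proof (rule idealI[OF ring_axioms])
  show "subgroup I (add_monoid R)"
  proof (rule add.subgroupI)
    fix a assume "a \<in> I"
    moreover have "\<ominus> a = \<ominus> \<one> \<otimes> a" using \<open>a \<in> I\<close> assms(1) by (auto simp: l_minus)
    ultimately show "\<ominus> a \<in> I" using assms(4) by simp
  qed (use assms in auto)
qed (use assms in auto)

lemma (in cring) add_pow_in_ideal:
  fixes a b :: nat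
  assumes Q: "ideal Q R" and x: "x \<in> carrier R" and y: "y \<in> carrier R"
    and "x [^] a \<in> Q" "y [^] b \<in> Q"
  shows "(x \<oplus> y) [^] (a + b) \<in> Q"
proof -
  interpret Q: ideal Q R by fact
  \<comment> \<open>binomial theorem by hand: expanding one factor \<open>x \<oplus> y\<close> at a time raises \<open>i\<close> or \<open>j\<close>\<close>
  have "x [^] i \<otimes> y [^] j \<otimes> (x \<oplus> y) [^] k \<in> Q" if "a + b \<le> i + j + k" for i j k :: nat
    using that
  proof (induction k arbitrary: i j)
    case 0
    then consider "a \<le> i" | "b \<le> j" by linarith
    then show ?case
    proof cases
      case 1
      then have "x [^] i = x [^] a \<otimes> x [^] (i - a)" using x by (simp add: nat_pow_mult)
      then have "x [^] i \<in> Q" using assms by (simp add: Q.I_r_closed)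
      then show ?thesis using x y by (simp add: Q.I_r_closed)
    next
      case 2
      then have "y [^] j = y [^] b \<otimes> y [^] (j - b)" using y by (simp add: nat_pow_mult)
      then have "y [^] j \<in> Q" using assms by (simp add: Q.I_r_closed)
      then show ?thesis using x y by (simp add: Q.I_l_closed)
    qed
  next
    case (Suc k)
    have "x [^] i \<otimes> y [^] j \<otimes> (x \<oplus> y) [^] Suc k =
      x [^] Suc i \<otimes> y [^] j \<otimes> (x \<oplus> y) [^] k \<oplus> x [^] i \<otimes> y [^] Suc j \<otimes> (x \<oplus> y) [^] k"
      using x y by (simp add: r_distr l_distr m_ac)
    moreover have "x [^] Suc i \<otimes> y [^] j \<otimes> (x \<oplus> y) [^] k \<in> Q"
      using Suc.IH[of "Suc i" j] Suc.prems by (simp del: nat_pow_Suc)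
    moreover have "x [^] i \<otimes> y [^] Suc j \<otimes> (x \<oplus> y) [^] k \<in> Q"
      using Suc.IH[of i "Suc j"] Suc.prems by (simp del: nat_pow_Suc)
    ultimately show ?case by simp
  qed
  from this[of 0 0 "a + b"] show ?thesis using x y by simp
qed

definition radical :: "('a, 'b) ring_scheme \<Rightarrow> 'a set \<Rightarrow> 'a set" where
  "radical R Q = {x \<in> carrier R. \<exists>n::nat. x [^]\<^bsub>R\<^esub> n \<in> Q}"

lemma (in cring) ideal_radical:
  assumes Q: "ideal Q R"
  shows "ideal (radical R Q) R"
proof (rule idealI_closed)
  interpret Q: ideal Q R by fact
  show "radical R Q \<subseteq> carrier R" by (auto simp: radical_def)
  have "\<zero> [^] (1::nat) \<in> Q" by simp
  then show "\<zero> \<in> radical R Q" unfolding radical_def by blast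
  fix x y assume "x \<in> radical R Q" "y \<in> radical R Q"
  then obtain a b :: nat where "x \<in> carrier R" "x [^] a \<in> Q" "y \<in> carrier R" "y [^] b \<in> Q"
    by (auto simp: radical_def)
  then show "x \<oplus> y \<in> radical R Q"
    using add_pow_in_ideal[OF Q] unfolding radical_def by blast
next
  fix x r assume "x \<in> radical R Q" "r \<in> carrier R"
  then obtain a :: nat where x: "x \<in> carrier R" "x [^] a \<in> Q" and r: "r \<in> carrier R"
    by (auto simp: radical_def)
  then have "(r \<otimes> x) [^] a \<in> Q" by (simp add: nat_pow_distrib ideal.I_l_closed[OF Q])
  then show "r \<otimes> x \<in> radical R Q \<and> x \<otimes> r \<in> radical R Q"
    using x r m_comm unfolding radical_def by auto
qed

lemma (in cring) generator_notin_radical: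
  assumes "ideal Q R" "Q \<noteq> carrier R" "S \<subseteq> carrier R" "Idl S = carrier R"
  shows "\<exists>s\<in>S. s \<notin> radical R Q"
proof (rule ccontr)
  assume "\<not> ?thesis"
  then have "carrier R \<subseteq> radical R Q"
    using genideal_minimal[OF ideal_radical[OF assms(1)]] assms(4) by auto
  then obtain n :: nat where "\<one> [^] n \<in> Q" by (auto simp: radical_def)
  then show False using ideal.one_imp_carrier[OF assms(1)] assms(2) by simp
qed

section \<open>The space of ideals\<close>

lemma embedding_map_pullback_topology:
  assumes "inj_on f A" "f ` A \<subseteq> topspace T"
  shows "embedding_map (pullback_topology A f T) T f"
proof -
  have top: "topspace (pullback_topology A f T) = A"
    using assms(2) by (auto simp: topspace_pullback_topology)
  have "continuous_map (subtopology T (f ` A)) (pullback_topology A f T) (inv_into A f)"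
  proof (rule continuous_map_pullback')
    show "continuous_map (subtopology T (f ` A)) T (f \<circ> inv_into A f)"
      by (rule continuous_map_eq[OF continuous_map_from_subtopology[OF continuous_map_id]])
        (auto simp: f_inv_into_f)
  qed (auto simp: inv_into_into)
  moreover have "continuous_map (pullback_topology A f T) (subtopology T (f ` A)) f"
    using continuous_map_pullback[OF continuous_map_id, of A f]
    by (auto simp: continuous_map_in_subtopology top)
  ultimately show ?thesis
    unfolding embedding_map_def homeomorphic_map_maps homeomorphic_maps_def top
    using assms(1) by (auto simp: inv_into_f_f f_inv_into_f)
qed

definition bool_cube :: "('a, 'b) ring_scheme \<Rightarrow> ('a \<Rightarrow> bool) topology" where
  "bool_cube R = product_topology (\<lambda>_. discrete_topology UNIV) (carrier R)"

definition char_fun :: "('a, 'b) ring_scheme \<Rightarrow> 'a set \<Rightarrow> 'a \<Rightarrow> bool" where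
  "char_fun R I = restrict (\<lambda>x. x \<in> I) (carrier R)"

lemma ideal_top_eq_pullback: "ideal_top R = pullback_topology (proper_ideals R) (char_fun R) (bool_cube R)"
  unfolding ideal_top_def bool_cube_def char_fun_def[abs_def] by (rule refl)

lemma topspace_bool_cube: "topspace (bool_cube R) = (\<Pi>\<^sub>E a\<in>carrier R. UNIV)"
  by (simp add: bool_cube_def)

lemma proper_ideals_subset_carrier: "I \<in> proper_ideals R \<Longrightarrow> I \<subseteq> carrier R"
  by (auto simp: proper_ideals_def dest: ideal.Icarr)

lemma embedding_map_char_fun: "embedding_map (ideal_top R) (bool_cube R) (char_fun R)"
proof -
  have "inj_on (char_fun R) (proper_ideals R)"
  proof (rule inj_onI)
    fix I J assume "I \<in> proper_ideals R" "J \<in> proper_ideals R" "char_fun R I = char_fun R J"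
    then show "I = J"
      using proper_ideals_subset_carrier[of I R] proper_ideals_subset_carrier[of J R]
      by (auto simp: char_fun_def restrict_def fun_eq_iff; metis subsetD)
  qed
  moreover have "char_fun R ` proper_ideals R \<subseteq> topspace (bool_cube R)"
    by (auto simp: topspace_bool_cube char_fun_def)
  ultimately show ?thesis
    unfolding ideal_top_eq_pullback by (rule embedding_map_pullback_topology)
qed

lemma topspace_ideal_top [simp]: "topspace (ideal_top R) = proper_ideals R"
  by (auto simp: ideal_top_eq_pullback topspace_pullback_topology topspace_bool_cube char_fun_def)

lemma Hausdorff_space_ideal_top: "Hausdorff_space (ideal_top R)"
proof -
  have "Hausdorff_space (bool_cube R)"
    by (simp add: bool_cube_def Hausdorff_space_product_topology)
  then show ?thesis
    using embedding_map_char_fun embedding_map_imp_homeomorphic_space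
      Hausdorff_space_subtopology homeomorphic_Hausdorff_space by metis
qed

lemma continuous_map_ideal_mem:
  assumes "a \<in> carrier R"
  shows "continuous_map (ideal_top R) (discrete_topology UNIV) (\<lambda>I. a \<in> I)"
proof -
  have "continuous_map (ideal_top R) (discrete_topology UNIV) ((\<lambda>h. h a) \<circ> char_fun R)"
    unfolding ideal_top_eq_pullback bool_cube_def
    by (intro continuous_map_pullback continuous_map_product_projection assms)
  then show ?thesis
    using assms by (simp add: o_def char_fun_def)
qed

lemma continuous_map_into_ideal_top:
  assumes "g ` topspace T \<subseteq> proper_ideals R"
    and "\<And>a. a \<in> carrier R \<Longrightarrow> continuous_map T (discrete_topology UNIV) (\<lambda>x. a \<in> g x)"
  shows "continuous_map T (ideal_top R) g"
  unfolding ideal_top_eq_pullback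
proof (rule continuous_map_pullback')
  show "continuous_map T (bool_cube R) (char_fun R \<circ> g)"
    unfolding bool_cube_def continuous_map_componentwise
    using assms(2) by (auto simp: char_fun_def)
qed (use assms(1) in auto)

lemma closedin_bool_cube_coord:
  assumes "a \<in> carrier R"
  shows "closedin (bool_cube R) {h \<in> topspace (bool_cube R). h a = v}"
  using closedin_continuous_map_preimage[OF continuous_map_product_projection[OF assms,
        of "\<lambda>_. discrete_topology UNIV"], of "{v}"]
  by (simp add: bool_cube_def)

lemma (in ring) char_fun_image_proper_ideals:
  "char_fun R ` proper_ideals R =
     {h \<in> topspace (bool_cube R). h \<zero> \<and> \<not> h \<one> \<and>
        (\<forall>a\<in>carrier R. \<forall>b\<in>carrier R. h a \<and> h b \<longrightarrow> h (a \<oplus> b)) \<and>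
        (\<forall>a\<in>carrier R. \<forall>r\<in>carrier R. h a \<longrightarrow> h (r \<otimes> a) \<and> h (a \<otimes> r))}"
    (is "_ = ?H")
proof
  show "char_fun R ` proper_ideals R \<subseteq> ?H"
  proof
    fix h assume "h \<in> char_fun R ` proper_ideals R"
    then obtain I where I: "ideal I R" "I \<noteq> carrier R" and h: "h = char_fun R I"
      by (auto simp: proper_ideals_def)
    interpret I: ideal I R by fact
    have "\<one> \<notin> I" using I I.one_imp_carrier by blast
    then show "h \<in> ?H"
      by (auto simp: h char_fun_def topspace_bool_cube I.I_l_closed I.I_r_closed)
  qed
next
  show "?H \<subseteq> char_fun R ` proper_ideals R"
  proof
    fix h assume h: "h \<in> ?H"
    define I where "I = {x \<in> carrier R. h x}"
    have "ideal I R"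
      by (rule idealI_closed) (use h in \<open>auto simp: I_def\<close>)
    moreover have "I \<noteq> carrier R" using h by (auto simp: I_def)
    moreover have "char_fun R I = h"
      using h by (auto simp: char_fun_def I_def topspace_bool_cube PiE_def extensional_def fun_eq_iff)
    ultimately show "h \<in> char_fun R ` proper_ideals R"
      by (auto simp: proper_ideals_def)
  qed
qed

lemma (in ring) closedin_char_fun_image:
  "closedin (bool_cube R) (char_fun R ` proper_ideals R)"
proof -
  let ?C = "\<lambda>a v. {h \<in> topspace (bool_cube R). h a = v}"
  have "char_fun R ` proper_ideals R = ?C \<zero> True \<inter> ?C \<one> False \<inter>
      (\<Inter>a\<in>carrier R. \<Inter>b\<in>carrier R. ?C a False \<union> ?C b False \<union> ?C (a \<oplus> b) True) \<inter>
      (\<Inter>a\<in>carrier R. \<Inter>r\<in>carrier R. ?C a False \<union> (?C (r \<otimes> a) True \<inter> ?C (a \<otimes> r) True))"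
    (is "_ = ?K")
    unfolding char_fun_image_proper_ideals by auto
  moreover have "closedin (bool_cube R) ?K"
    by (intro closedin_Int closedin_INT closedin_Un closedin_bool_cube_coord) auto
  ultimately show ?thesis by simp
qed

lemma (in ring) compact_space_ideal_top: "compact_space (ideal_top R)"
proof -
  have "compact_space (bool_cube R)"
    by (simp add: bool_cube_def compact_space_product_topology compact_space_discrete_topology)
  then have "compact_space (subtopology (bool_cube R) (char_fun R ` proper_ideals R))"
    using closedin_char_fun_image closedin_compact_space compact_space_subtopology by blast
  then show ?thesis
    using embedding_map_char_fun embedding_map_imp_homeomorphic_space homeomorphic_compact_space
    by (metis topspace_ideal_top)
qed

lemma prim_subset_proper_ideals: "prim R \<subseteq> proper_ideals R"
  unfolding prim_def using closure_of_subset_topspace by fastforce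

lemma primary_ideals_subset_prim: "{I. primary_ideal R I} \<subseteq> prim R"
  unfolding prim_def
  by (rule closure_of_subset) (auto simp: primary_ideal_def proper_ideals_def)

lemma (in ring) compactin_prim: "compactin (ideal_top R) (prim R)"
  unfolding prim_def by (rule closedin_compact_space[OF compact_space_ideal_top closedin_closure_of])

section \<open>Contraction of ideals along a ring homomorphism\<close>

context ring_hom_ring
begin

lemma proper_ideal_vimage:
  assumes "I \<in> proper_ideals S"
  shows "{r \<in> carrier R. h r \<in> I} \<in> proper_ideals R"
proof -
  have "ideal I S" "\<one>\<^bsub>S\<^esub> \<notin> I"
    using assms ideal.one_imp_carrier by (auto simp: proper_ideals_def)
  then have "{r \<in> carrier R. h r \<in> I} \<noteq> carrier R"
    using R.one_closed by force
  then show ?thesis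
    using ideal_vimage \<open>ideal I S\<close> by (simp add: proper_ideals_def)
qed

lemma primary_ideal_vimage:
  assumes "primary_ideal S I"
  shows "primary_ideal R {r \<in> carrier R. h r \<in> I}"
proof -
  have "{r \<in> carrier R. h r \<in> I} \<in> proper_ideals R"
    using assms by (intro proper_ideal_vimage) (simp add: primary_ideal_def proper_ideals_def)
  moreover have "\<exists>n::nat. h (b [^] n) \<in> I"
    if ab: "a \<in> carrier R" "b \<in> carrier R" "h (a \<otimes> b) \<in> I" "h a \<notin> I" for a b
  proof -
    have "h a \<in> carrier S" "h b \<in> carrier S" "h a \<otimes>\<^bsub>S\<^esub> h b \<in> I"
      using ab by auto
    then obtain n :: nat where "h b [^]\<^bsub>S\<^esub> n \<in> I"
      using assms ab(4) unfolding primary_ideal_def by blast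
    then show ?thesis using ab(2) by (auto simp: hom_nat_pow)
  qed
  ultimately show ?thesis
    by (simp add: primary_ideal_def proper_ideals_def)
qed

lemma continuous_map_ideal_vimage:
  "continuous_map (ideal_top S) (ideal_top R) (\<lambda>I. {r \<in> carrier R. h r \<in> I})"
proof (rule continuous_map_into_ideal_top)
  show "(\<lambda>I. {r \<in> carrier R. h r \<in> I}) ` topspace (ideal_top S) \<subseteq> proper_ideals R"
    using proper_ideal_vimage by auto
  fix a assume "a \<in> carrier R"
  then show "continuous_map (ideal_top S) (discrete_topology UNIV) (\<lambda>I. a \<in> {r \<in> carrier R. h r \<in> I})"
    using continuous_map_ideal_mem[of "h a" S] by simp
qed

lemma vimage_prim_subset: "(\<lambda>I. {r \<in> carrier R. h r \<in> I}) ` prim S \<subseteq> prim R"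
proof -
  have "(\<lambda>I. {r \<in> carrier R. h r \<in> I}) ` prim S \<subseteq>
      ideal_top R closure_of ((\<lambda>I. {r \<in> carrier R. h r \<in> I}) ` {I. primary_ideal S I})"
    unfolding prim_def by (rule continuous_map_image_closure_subset[OF continuous_map_ideal_vimage])
  also have "\<dots> \<subseteq> prim R"
    unfolding prim_def by (rule closure_of_mono) (auto intro: primary_ideal_vimage)
  finally show ?thesis .
qed

lemma compactin_vimage_prim:
  "compactin (subtopology (ideal_top R) (prim R)) ((\<lambda>I. {r \<in> carrier R. h r \<in> I}) ` prim S)"
  using image_compactin[OF S.compactin_prim continuous_map_ideal_vimage] vimage_prim_subset
  by (simp add: compactin_subtopology)

lemma homeomorphic_map_vimage_prim:
  assumes "inj_on (\<lambda>I. {r \<in> carrier R. h r \<in> I}) (prim S)"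
  shows "homeomorphic_map (subtopology (ideal_top S) (prim S))
      (subtopology (ideal_top R) ((\<lambda>I. {r \<in> carrier R. h r \<in> I}) ` prim S))
      (\<lambda>I. {r \<in> carrier R. h r \<in> I})"
proof -
  have top: "topspace (subtopology (ideal_top S) (prim S)) = prim S"
    using prim_subset_proper_ideals by fastforce
  have "embedding_map (subtopology (ideal_top S) (prim S)) (ideal_top R) (\<lambda>I. {r \<in> carrier R. h r \<in> I})"
  proof (rule continuous_imp_embedding_map)
    show "compact_space (subtopology (ideal_top S) (prim S))"
      by (simp add: S.compactin_prim compact_space_subtopology)
    show "inj_on (\<lambda>I. {r \<in> carrier R. h r \<in> I}) (topspace (subtopology (ideal_top S) (prim S)))"
      using assms by (simp only: top)
  qed (simp_all add: continuous_map_from_subtopology continuous_map_ideal_vimage Hausdorff_space_ideal_top)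
  then show ?thesis unfolding embedding_map_def top .
qed

end

section \<open>Localization at one element\<close>

lemma (in cring) mult_diff_eq_zero_iff:
  assumes "c \<in> carrier R" "x \<in> carrier R" "y \<in> carrier R"
  shows "c \<otimes> (x \<ominus> y) = \<zero> \<longleftrightarrow> c \<otimes> x = c \<otimes> y"
proof -
  have "c \<otimes> (x \<ominus> y) = c \<otimes> x \<ominus> c \<otimes> y"
    using assms by (simp add: minus_eq r_distr r_minus)
  then show ?thesis using assms by (simp add: r_right_minus_eq)
qed

locale localization = cring R for R (structure) +
  fixes f
  assumes f_closed [simp]: "f \<in> carrier R"
begin

abbreviation "rel \<equiv> loc_rel R f"
abbreviation "cls \<equiv> loc_class R f"
abbreviation "L \<equiv> loc_ring R f"

lemma loc_rel_iff:
  "((a, n), (b, m)) \<in> rel \<longleftrightarrow> a \<in> carrier R \<and> b \<in> carrier R \<and>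
     (\<exists>k::nat. f [^] k \<otimes> (a \<otimes> f [^] m) = f [^] k \<otimes> (b \<otimes> f [^] n))"
  unfolding loc_rel_def using mult_diff_eq_zero_iff by auto

lemma loc_rel_refl: "a \<in> carrier R \<Longrightarrow> ((a, n), (a, n)) \<in> rel"
  by (auto simp: loc_rel_iff)

lemma loc_rel_sym: "((a, n), (b, m)) \<in> rel \<Longrightarrow> ((b, m), (a, n)) \<in> rel"
  by (auto simp: loc_rel_iff) metis

lemma loc_rel_trans:
  assumes "((a, n), (b, m)) \<in> rel" "((b, m), (c, p)) \<in> rel"
  shows "((a, n), (c, p)) \<in> rel"
proof -
  from assms obtain k l :: nat where a: "a \<in> carrier R" and b: "b \<in> carrier R" and c: "c \<in> carrier R"
    and E1: "f [^] k \<otimes> (a \<otimes> f [^] m) = f [^] k \<otimes> (b \<otimes> f [^] n)"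
    and E2: "f [^] l \<otimes> (b \<otimes> f [^] p) = f [^] l \<otimes> (c \<otimes> f [^] m)"
    by (auto simp: loc_rel_iff)
  have "f [^] (k + l + m) \<otimes> (a \<otimes> f [^] p) = (f [^] k \<otimes> (a \<otimes> f [^] m)) \<otimes> (f [^] l \<otimes> f [^] p)"
    using a by (simp add: nat_pow_mult[symmetric] m_ac)
  also have "\<dots> = (f [^] l \<otimes> (b \<otimes> f [^] p)) \<otimes> (f [^] k \<otimes> f [^] n)"
    using b by (simp add: E1 m_ac)
  also have "\<dots> = f [^] (k + l + m) \<otimes> (c \<otimes> f [^] n)"
    using c by (simp add: E2 nat_pow_mult[symmetric] m_ac)
  finally show ?thesis using a c by (auto simp: loc_rel_iff)
qed

lemma equiv_loc_rel: "equiv (carrier R \<times> UNIV) rel"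
proof (rule equivI)
  show "refl_on (carrier R \<times> UNIV) rel"
    by (auto simp: refl_on_def loc_rel_refl)
  show "rel \<subseteq> (carrier R \<times> UNIV) \<times> (carrier R \<times> UNIV)"
    by (auto simp: loc_rel_def)
  show "sym rel" by (auto simp: sym_def intro: loc_rel_sym)
  show "trans rel" by (auto simp: trans_def intro: loc_rel_trans)
qed

lemma loc_rel_mult:
  assumes "((a, n), (a', n')) \<in> rel" "((b, m), (b', m')) \<in> rel"
  shows "((a \<otimes> b, n + m), (a' \<otimes> b', n' + m')) \<in> rel"
proof -
  from assms obtain k l :: nat where a: "a \<in> carrier R" "a' \<in> carrier R" and b: "b \<in> carrier R" "b' \<in> carrier R"
    and E1: "f [^] k \<otimes> (a \<otimes> f [^] n') = f [^] k \<otimes> (a' \<otimes> f [^] n)"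
    and E2: "f [^] l \<otimes> (b \<otimes> f [^] m') = f [^] l \<otimes> (b' \<otimes> f [^] m)"
    by (auto simp: loc_rel_iff)
  have "f [^] (k + l) \<otimes> (a \<otimes> b \<otimes> f [^] (n' + m')) = (f [^] k \<otimes> (a \<otimes> f [^] n')) \<otimes> (f [^] l \<otimes> (b \<otimes> f [^] m'))"
    using a b by (simp add: nat_pow_mult[symmetric] m_ac)
  also have "\<dots> = f [^] (k + l) \<otimes> (a' \<otimes> b' \<otimes> f [^] (n + m))"
    using a b by (simp add: E1 E2 nat_pow_mult[symmetric] m_ac)
  finally show ?thesis using a b by (auto simp: loc_rel_iff)
qed

lemma loc_rel_add:
  assumes "((a, n), (a', n')) \<in> rel" "((b, m), (b', m')) \<in> rel"
  shows "((a \<otimes> f [^] m \<oplus> b \<otimes> f [^] n, n + m), (a' \<otimes> f [^] m' \<oplus> b' \<otimes> f [^] n', n' + m')) \<in> rel"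
proof -
  from assms obtain k l :: nat where a: "a \<in> carrier R" "a' \<in> carrier R" and b: "b \<in> carrier R" "b' \<in> carrier R"
    and E1: "f [^] k \<otimes> (a \<otimes> f [^] n') = f [^] k \<otimes> (a' \<otimes> f [^] n)"
    and E2: "f [^] l \<otimes> (b \<otimes> f [^] m') = f [^] l \<otimes> (b' \<otimes> f [^] m)"
    by (auto simp: loc_rel_iff)
  have "f [^] (k + l) \<otimes> ((a \<otimes> f [^] m \<oplus> b \<otimes> f [^] n) \<otimes> f [^] (n' + m')) =
     (f [^] k \<otimes> (a \<otimes> f [^] n')) \<otimes> (f [^] l \<otimes> f [^] m \<otimes> f [^] m') \<oplus>
     (f [^] l \<otimes> (b \<otimes> f [^] m')) \<otimes> (f [^] k \<otimes> f [^] n \<otimes> f [^] n')"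
    using a b by (simp add: nat_pow_mult[symmetric] m_ac l_distr r_distr)
  also have "\<dots> = f [^] (k + l) \<otimes> ((a' \<otimes> f [^] m' \<oplus> b' \<otimes> f [^] n') \<otimes> f [^] (n + m))"
    using a b by (simp add: E1 E2 nat_pow_mult[symmetric] m_ac l_distr r_distr a_ac)
  finally show ?thesis using a b by (auto simp: loc_rel_iff)
qed

lemma mem_loc_class: "q \<in> cls p \<longleftrightarrow> (p, q) \<in> rel"
  by (simp add: loc_class_def)

lemma loc_class_eqI: "((a, n), (b, m)) \<in> rel \<Longrightarrow> cls (a, n) = cls (b, m)"
  unfolding loc_class_def using equiv_class_eq[OF equiv_loc_rel] by auto

lemma loc_class_eq_iff:
  "a \<in> carrier R \<Longrightarrow> b \<in> carrier R \<Longrightarrow> cls (a, n) = cls (b, m) \<longleftrightarrow> ((a, n), (b, m)) \<in> rel"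
  unfolding loc_class_def using eq_equiv_class_iff[OF equiv_loc_rel] by auto

lemma carrier_loc_ring: "carrier L = {cls (a, n) | a n. a \<in> carrier R}"
  unfolding loc_ring_def quotient_def loc_class_def by auto

lemma loc_class_closed [simp]: "a \<in> carrier R \<Longrightarrow> cls (a, n) \<in> carrier L"
  by (auto simp: carrier_loc_ring)

lemma loc_ring_cases:
  assumes "U \<in> carrier L"
  obtains a n where "a \<in> carrier R" "U = cls (a, n)"
  using assms by (auto simp: carrier_loc_ring)

lemma loc_rep_rel: "a \<in> carrier R \<Longrightarrow> ((a, n), loc_rep (cls (a, n))) \<in> rel"
  unfolding loc_rep_def using someI[of "\<lambda>q. q \<in> cls (a, n)" "(a, n)"]
  by (simp add: mem_loc_class loc_rel_refl)

lemma loc_mult_class: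
  assumes "a \<in> carrier R" "b \<in> carrier R"
  shows "cls (a, n) \<otimes>\<^bsub>L\<^esub> cls (b, m) = cls (a \<otimes> b, n + m)"
proof -
  obtain a' n' b' m' where rep: "loc_rep (cls (a, n)) = (a', n')" "loc_rep (cls (b, m)) = (b', m')"
    by fastforce
  then have "((a \<otimes> b, n + m), (a' \<otimes> b', n' + m')) \<in> rel"
    using loc_rep_rel assms by (metis loc_rel_mult)
  then show ?thesis
    using rep by (simp add: loc_ring_def loc_class_eqI)
qed

lemma loc_add_class:
  assumes "a \<in> carrier R" "b \<in> carrier R"
  shows "cls (a, n) \<oplus>\<^bsub>L\<^esub> cls (b, m) = cls (a \<otimes> f [^] m \<oplus> b \<otimes> f [^] n, n + m)"
proof -
  obtain a' n' b' m' where rep: "loc_rep (cls (a, n)) = (a', n')" "loc_rep (cls (b, m)) = (b', m')"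
    by fastforce
  then have "((a \<otimes> f [^] m \<oplus> b \<otimes> f [^] n, n + m), (a' \<otimes> f [^] m' \<oplus> b' \<otimes> f [^] n', n' + m')) \<in> rel"
    using loc_rep_rel assms by (metis loc_rel_add)
  then show ?thesis
    using rep by (simp add: loc_ring_def loc_class_eqI)
qed

lemma loc_one: "\<one>\<^bsub>L\<^esub> = cls (\<one>, 0)"
  by (simp add: loc_ring_def)

lemma loc_zero: "\<zero>\<^bsub>L\<^esub> = cls (\<zero>, 0)"
  by (simp add: loc_ring_def)

lemma abelian_group_loc_ring: "abelian_group L"
proof (rule abelian_groupI)
  fix x y z assume "x \<in> carrier L" "y \<in> carrier L" "z \<in> carrier L"
  then show "x \<oplus>\<^bsub>L\<^esub> y \<oplus>\<^bsub>L\<^esub> z = x \<oplus>\<^bsub>L\<^esub> (y \<oplus>\<^bsub>L\<^esub> z)"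
    by (elim loc_ring_cases)
      (simp add: loc_add_class nat_pow_mult[symmetric] m_ac l_distr r_distr a_ac add.assoc)
next
  fix x y assume "x \<in> carrier L" "y \<in> carrier L"
  then show "x \<oplus>\<^bsub>L\<^esub> y \<in> carrier L"
    by (elim loc_ring_cases) (simp add: loc_add_class)
  from \<open>x \<in> carrier L\<close> \<open>y \<in> carrier L\<close> show "x \<oplus>\<^bsub>L\<^esub> y = y \<oplus>\<^bsub>L\<^esub> x"
    by (elim loc_ring_cases) (simp add: loc_add_class a_ac add.commute)
next
  fix x assume "x \<in> carrier L"
  then obtain a n where a: "a \<in> carrier R" "x = cls (a, n)" by (rule loc_ring_cases)
  then show "\<zero>\<^bsub>L\<^esub> \<oplus>\<^bsub>L\<^esub> x = x" by (simp add: loc_add_class loc_zero)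
  have "cls (\<ominus> a, n) \<oplus>\<^bsub>L\<^esub> x = \<zero>\<^bsub>L\<^esub>"
    using a by (simp add: loc_add_class loc_zero l_minus l_neg loc_class_eq_iff loc_rel_iff)
  then show "\<exists>y\<in>carrier L. y \<oplus>\<^bsub>L\<^esub> x = \<zero>\<^bsub>L\<^esub>"
    using a(1) by (intro bexI[of _ "cls (\<ominus> a, n)"]) auto
qed (simp add: loc_zero)

lemma comm_monoid_loc_ring: "comm_monoid L"
proof (rule comm_monoidI)
  fix x y z assume "x \<in> carrier L" "y \<in> carrier L" "z \<in> carrier L"
  then show "x \<otimes>\<^bsub>L\<^esub> y \<otimes>\<^bsub>L\<^esub> z = x \<otimes>\<^bsub>L\<^esub> (y \<otimes>\<^bsub>L\<^esub> z)"
    by (elim loc_ring_cases) (simp add: loc_mult_class m_ac add.assoc)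
next
  fix x y assume "x \<in> carrier L" "y \<in> carrier L"
  then show "x \<otimes>\<^bsub>L\<^esub> y \<in> carrier L"
    by (elim loc_ring_cases) (simp add: loc_mult_class)
  from \<open>x \<in> carrier L\<close> \<open>y \<in> carrier L\<close> show "x \<otimes>\<^bsub>L\<^esub> y = y \<otimes>\<^bsub>L\<^esub> x"
    by (elim loc_ring_cases) (simp add: loc_mult_class m_ac add.commute)
next
  fix x assume "x \<in> carrier L"
  then show "\<one>\<^bsub>L\<^esub> \<otimes>\<^bsub>L\<^esub> x = x"
    by (elim loc_ring_cases) (simp add: loc_mult_class loc_one)
qed (simp add: loc_one)

lemma cring_loc_ring: "cring L"
proof (rule cringI[OF abelian_group_loc_ring comm_monoid_loc_ring])
  fix x y z assume "x \<in> carrier L" "y \<in> carrier L" "z \<in> carrier L"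
  then obtain a n b m c p where abc: "a \<in> carrier R" "b \<in> carrier R" "c \<in> carrier R"
    and "x = cls (a, n)" "y = cls (b, m)" "z = cls (c, p)"
    by (metis loc_ring_cases)
  moreover have "cls ((a \<otimes> f [^] m \<oplus> b \<otimes> f [^] n) \<otimes> c, n + m + p) =
      cls (a \<otimes> c \<otimes> f [^] (m + p) \<oplus> b \<otimes> c \<otimes> f [^] (n + p), n + p + (m + p))"
    using abc by (simp add: loc_class_eq_iff loc_rel_iff)
      (rule exI[of _ 0], simp add: nat_pow_mult[symmetric] m_ac l_distr r_distr a_ac)
  ultimately show "(x \<oplus>\<^bsub>L\<^esub> y) \<otimes>\<^bsub>L\<^esub> z = x \<otimes>\<^bsub>L\<^esub> z \<oplus>\<^bsub>L\<^esub> y \<otimes>\<^bsub>L\<^esub> z"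
    by (simp add: loc_add_class loc_mult_class)
qed

lemma loc_pow_class: "a \<in> carrier R \<Longrightarrow> cls (a, n) [^]\<^bsub>L\<^esub> (k::nat) = cls (a [^] k, n * k)"
  by (induction k) (simp_all add: loc_one loc_mult_class add.commute)

lemma ring_hom_ring_loc_map: "ring_hom_ring R L (loc_map R f)"
  by (rule ring_hom_ringI[OF ring_axioms cring.axioms(1)[OF cring_loc_ring]])
    (simp_all add: loc_map_def loc_mult_class loc_add_class loc_one)

lemma res_eq_vimage: "res R f = (\<lambda>I. {a \<in> carrier R. loc_map R f a \<in> I})"
  by (simp add: res_def[abs_def])

lemma loc_ideal_mem_iff:
  assumes I: "ideal I L" and a: "a \<in> carrier R"
  shows "cls (a, n) \<in> I \<longleftrightarrow> a \<in> res R f I"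
proof -
  interpret I: ideal I L by fact
  \<comment> \<open>\<open>a/f^n\<close> and \<open>a/1\<close> differ by the unit \<open>f^n/1\<close>\<close>
  have "cls (a, n) \<otimes>\<^bsub>L\<^esub> cls (f [^] n, 0) = cls (a, 0)"
    using a by (simp add: loc_mult_class loc_class_eq_iff loc_rel_iff)
  moreover have "cls (a, 0) \<otimes>\<^bsub>L\<^esub> cls (\<one>, n) = cls (a, n)"
    using a by (simp add: loc_mult_class)
  ultimately have "cls (a, n) \<in> I \<longleftrightarrow> cls (a, 0) \<in> I"
    using a I.I_r_closed[of "cls (a, n)" "cls (f [^] n, 0)"] I.I_r_closed[of "cls (a, 0)" "cls (\<one>, n)"]
    by auto
  then show ?thesis
    using a by (simp add: res_def loc_map_def)
qed

lemma inj_on_res: "inj_on (res R f) {I. ideal I L}"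
proof (rule inj_onI)
  fix I J assume I: "I \<in> {I. ideal I L}" and J: "J \<in> {I. ideal I L}" and eq: "res R f I = res R f J"
  have "U \<in> I \<longleftrightarrow> U \<in> J" if "U \<in> carrier L" for U
    using that I J by (elim loc_ring_cases) (simp add: loc_ideal_mem_iff eq)
  moreover have "I \<subseteq> carrier L" "J \<subseteq> carrier L"
    using I J by (auto dest: ideal.Icarr)
  ultimately show "I = J" by blast
qed

end

lemma primary_ideal_imp_ideal: "primary_ideal R Q \<Longrightarrow> ideal Q R"
  by (simp add: primary_ideal_def)

lemma primary_ideal_subset_carrier: "primary_ideal R Q \<Longrightarrow> Q \<subseteq> carrier R"
  by (auto simp: primary_ideal_def dest: ideal.Icarr)

definition loc_ext :: "('a, 'b) ring_scheme \<Rightarrow> 'a \<Rightarrow> 'a set \<Rightarrow> ('a \<times> nat) set set" where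
  "loc_ext R f Q = {loc_class R f (a, n) | a n. a \<in> Q}"

context localization
begin

context
  fixes Q
  assumes Q_primary: "primary_ideal R Q" and Q_no_power: "\<forall>n::nat. f [^] n \<notin> Q"
begin

lemma loc_rel_saturated:
  assumes "((a, n), (b, m)) \<in> rel" "a \<in> Q"
  shows "b \<in> Q"
proof (rule ccontr)
  assume "b \<notin> Q"
  interpret Q: ideal Q R by (rule primary_ideal_imp_ideal[OF Q_primary])
  obtain k :: nat where b: "b \<in> carrier R" and E: "f [^] k \<otimes> (a \<otimes> f [^] m) = f [^] k \<otimes> (b \<otimes> f [^] n)"
    using assms(1) by (auto simp: loc_rel_iff)
  have "f [^] k \<otimes> (a \<otimes> f [^] m) \<in> Q"
    using assms(2) by (simp add: Q.I_l_closed Q.I_r_closed)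
  then have "b \<otimes> f [^] (k + n) \<in> Q"
    using b by (simp add: E nat_pow_mult[symmetric] m_ac)
  then obtain N :: nat where "(f [^] (k + n)) [^] N \<in> Q"
    using Q_primary b \<open>b \<notin> Q\<close> unfolding primary_ideal_def by (meson f_closed nat_pow_closed)
  then show False
    using Q_no_power by (simp add: nat_pow_pow)
qed

lemma loc_class_mem_ext_iff:
  assumes "a \<in> carrier R"
  shows "cls (a, n) \<in> loc_ext R f Q \<longleftrightarrow> a \<in> Q"
proof
  assume "cls (a, n) \<in> loc_ext R f Q"
  then obtain b m where "b \<in> Q" "cls (a, n) = cls (b, m)"
    by (auto simp: loc_ext_def)
  moreover have "b \<in> carrier R"
    using \<open>b \<in> Q\<close> primary_ideal_subset_carrier[OF Q_primary] by blast
  ultimately show "a \<in> Q"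
    using assms loc_rel_saturated loc_rel_sym by (metis loc_class_eq_iff)
qed (auto simp: loc_ext_def)

lemma loc_ext_subset: "loc_ext R f Q \<subseteq> carrier L"
  using primary_ideal_subset_carrier[OF Q_primary] by (auto simp: loc_ext_def)

lemma ideal_loc_ext: "ideal (loc_ext R f Q) L"
proof (rule ring.idealI_closed[OF cring.axioms(1)[OF cring_loc_ring] loc_ext_subset])
  interpret Q: ideal Q R by (rule primary_ideal_imp_ideal[OF Q_primary])
  show "\<zero>\<^bsub>L\<^esub> \<in> loc_ext R f Q"
    by (simp add: loc_zero loc_class_mem_ext_iff)
  fix U V assume U: "U \<in> loc_ext R f Q"
  then obtain a n where a: "a \<in> Q" "U = cls (a, n)" by (auto simp: loc_ext_def)
  {
    assume "V \<in> loc_ext R f Q"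
    then obtain b m where b: "b \<in> Q" "V = cls (b, m)" by (auto simp: loc_ext_def)
    then show "U \<oplus>\<^bsub>L\<^esub> V \<in> loc_ext R f Q"
      using a by (simp add: loc_add_class loc_class_mem_ext_iff Q.I_r_closed)
  }
  {
    assume "V \<in> carrier L"
    then obtain b m where b: "b \<in> carrier R" "V = cls (b, m)" by (rule loc_ring_cases)
    then show "V \<otimes>\<^bsub>L\<^esub> U \<in> loc_ext R f Q \<and> U \<otimes>\<^bsub>L\<^esub> V \<in> loc_ext R f Q"
      using a by (simp add: loc_mult_class loc_class_mem_ext_iff Q.I_l_closed Q.I_r_closed)
  }
qed

lemma primary_ideal_loc_ext: "primary_ideal L (loc_ext R f Q)"
  unfolding primary_ideal_def
proof (intro conjI ballI impI)
  show "ideal (loc_ext R f Q) L" by (rule ideal_loc_ext)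
  have "\<one> \<notin> Q"
    using Q_primary ideal.one_imp_carrier by (auto simp: primary_ideal_def)
  then have "cls (\<one>, 0) \<notin> loc_ext R f Q"
    using loc_class_mem_ext_iff[of \<one> 0] by simp
  then show "loc_ext R f Q \<noteq> carrier L"
    using loc_class_closed[of \<one> 0] by blast
  fix U V assume "U \<in> carrier L" "V \<in> carrier L"
    and UV: "U \<otimes>\<^bsub>L\<^esub> V \<in> loc_ext R f Q" "U \<notin> loc_ext R f Q"
  then obtain a n b m where a: "a \<in> carrier R" "U = cls (a, n)" and b: "b \<in> carrier R" "V = cls (b, m)"
    by (metis loc_ring_cases)
  have "a \<otimes> b \<in> Q" "a \<notin> Q"
    using UV a b by (simp_all add: loc_mult_class loc_class_mem_ext_iff)
  then obtain N :: nat where "b [^] N \<in> Q"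
    using Q_primary a b unfolding primary_ideal_def by blast
  then show "\<exists>N::nat. V [^]\<^bsub>L\<^esub> N \<in> loc_ext R f Q"
    using b by (auto simp: loc_pow_class loc_class_mem_ext_iff)
qed

lemma res_loc_ext: "res R f (loc_ext R f Q) = Q"
  using loc_class_mem_ext_iff primary_ideal_subset_carrier[OF Q_primary]
  by (auto simp: res_def loc_map_def)

end

lemma primary_ideal_mem_res_prim:
  assumes "primary_ideal R Q" "\<forall>n::nat. f [^] n \<notin> Q"
  shows "Q \<in> res R f ` prim L"
  using primary_ideal_loc_ext[OF assms] res_loc_ext[OF assms] primary_ideals_subset_prim
  by blast

lemma res_prim_subset: "res R f ` prim L \<subseteq> prim R"
  using ring_hom_ring.vimage_prim_subset[OF ring_hom_ring_loc_map] by (simp add: res_eq_vimage)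

lemma compactin_res_prim: "compactin (subtopology (ideal_top R) (prim R)) (res R f ` prim L)"
  using ring_hom_ring.compactin_vimage_prim[OF ring_hom_ring_loc_map] by (simp add: res_eq_vimage)

lemma homeomorphic_map_res_prim:
  "homeomorphic_map (subtopology (ideal_top L) (prim L))
     (subtopology (ideal_top R) (res R f ` prim L)) (res R f)"
proof -
  have "prim L \<subseteq> {I. ideal I L}"
    using prim_subset_proper_ideals by (auto simp: proper_ideals_def)
  then have "inj_on (res R f) (prim L)"
    by (rule inj_on_subset[OF inj_on_res])
  then show ?thesis
    using ring_hom_ring.homeomorphic_map_vimage_prim[OF ring_hom_ring_loc_map]
    by (simp add: res_eq_vimage)
qed

end

section \<open>Covering prim(R) by finitely many localizations\<close>

lemma (in cring) localizationI: "f \<in> carrier R \<Longrightarrow> localization R f"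
  by (simp add: localization_def localization_axioms_def is_cring)

lemma (in cring) res_prim_cover:
  fixes fs :: "nat \<Rightarrow> 'a" and m :: nat
  assumes fs: "\<forall>i<m. fs i \<in> carrier R" and gen: "Idl (fs ` {..<m}) = carrier R"
  shows "(\<Union>i<m. res R (fs i) ` prim (loc_ring R (fs i))) = prim R"
    (is "?U = _")
proof
  have loc: "localization R (fs i)" if "i < m" for i
    using fs that by (simp add: localizationI)
  show "?U \<subseteq> prim R"
    using localization.res_prim_subset[OF loc] by blast
  have "closedin (ideal_top R) ?U"
  proof (rule closedin_Union)
    fix T assume "T \<in> (\<lambda>i. res R (fs i) ` prim (loc_ring R (fs i))) ` {..<m}"
    then have "compactin (ideal_top R) T"
      using localization.compactin_res_prim[OF loc] by (auto simp: compactin_subtopology)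
    then show "closedin (ideal_top R) T"
      by (rule compactin_imp_closedin[OF Hausdorff_space_ideal_top])
  qed simp
  moreover have "{I. primary_ideal R I} \<subseteq> ?U"
  proof
    fix Q assume "Q \<in> {I. primary_ideal R I}"
    then have Q: "primary_ideal R Q" by simp
    then obtain s where "s \<in> fs ` {..<m}" "s \<notin> radical R Q"
      using generator_notin_radical[of Q "fs ` {..<m}"] fs gen by (auto simp: primary_ideal_def)
    then obtain i where "i < m" "\<forall>n::nat. fs i [^] n \<notin> Q"
      using fs by (auto simp: radical_def)
    then show "Q \<in> ?U"
      using localization.primary_ideal_mem_res_prim[OF loc Q] by blast
  qed
  ultimately show "prim R \<subseteq> ?U"
    unfolding prim_def[of R] by (rule closure_of_minimal[rotated])
qed

theorem proposition5p10:
  fixes R :: "('a, 'b) ring_scheme"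
  assumes "cring R"
  shows "(\<forall>f. f \<in> carrier R \<and> (\<forall>n::nat. f [^]\<^bsub>R\<^esub> n \<noteq> \<zero>\<^bsub>R\<^esub>) \<longrightarrow>
            res R f ` prim (loc_ring R f) \<subseteq> prim R \<and>
            homeomorphic_map (subtopology (ideal_top (loc_ring R f)) (prim (loc_ring R f)))
                             (subtopology (ideal_top R) (res R f ` prim (loc_ring R f)))
                             (res R f) \<and>
            compactin (subtopology (ideal_top R) (prim R)) (res R f ` prim (loc_ring R f)))
       \<and> (\<forall>(fs :: nat \<Rightarrow> 'a) (m::nat).
            (\<forall>i<m. fs i \<in> carrier R \<and> (\<forall>n::nat. fs i [^]\<^bsub>R\<^esub> n \<noteq> \<zero>\<^bsub>R\<^esub>)) \<and>
            genideal R (fs ` {..<m}) = carrier R \<longrightarrow>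
            (\<Union>i<m. res R (fs i) ` prim (loc_ring R (fs i))) = prim R \<and>
            (\<forall>i<m. compactin (subtopology (ideal_top R) (prim R))
                              (res R (fs i) ` prim (loc_ring R (fs i)))))"
proof (intro conjI allI impI)
  fix f assume "f \<in> carrier R \<and> (\<forall>n::nat. f [^]\<^bsub>R\<^esub> n \<noteq> \<zero>\<^bsub>R\<^esub>)"
  then interpret localization R f by (simp add: cring.localizationI[OF assms])
  show "res R f ` prim (loc_ring R f) \<subseteq> prim R" by (rule res_prim_subset)
  show "homeomorphic_map (subtopology (ideal_top (loc_ring R f)) (prim (loc_ring R f)))
      (subtopology (ideal_top R) (res R f ` prim (loc_ring R f))) (res R f)"
    by (rule homeomorphic_map_res_prim)
  show "compactin (subtopology (ideal_top R) (prim R)) (res R f ` prim (loc_ring R f))"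
    by (rule compactin_res_prim)
next
  fix fs :: "nat \<Rightarrow> 'a" and m :: nat
  assume fs: "(\<forall>i<m. fs i \<in> carrier R \<and> (\<forall>n::nat. fs i [^]\<^bsub>R\<^esub> n \<noteq> \<zero>\<^bsub>R\<^esub>)) \<and>
      genideal R (fs ` {..<m}) = carrier R"
  then show "(\<Union>i<m. res R (fs i) ` prim (loc_ring R (fs i))) = prim R"
    using cring.res_prim_cover[OF assms] by blast
  fix i assume "i < m"
  with fs have "localization R (fs i)"
    by (simp add: cring.localizationI[OF assms])
  then show "compactin (subtopology (ideal_top R) (prim R)) (res R (fs i) ` prim (loc_ring R (fs i)))"
    by (rule localization.compactin_res_prim)
qed

end
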